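(* Let $X$ be a $T_1$ topological space and $f,g\in T''(X)$. If $f\in M(g)$, then $Z(g)\subseteq Z(f)$.
   Context: $C(X)$ is the ring of real-valued continuous functions on $X$; a cozero set is a set $\{x: h(x)\neq 0\}$ with $h\in C(X)$. $T''(X)$ is the ring (under pointwise operations) of all functions $f\colon X\to\mathbb{R}$ for which there is a dense cozero set $U$ of $X$ with $f|_U$ continuous. $Z(f)=\{x\in X: f(x)=0\}$. $M(g)$ denotes the intersection of all maximal ideals of $T''(X)$ containing $g$. *)

theory Defs
  imports "HOL-Analysis.Analysis" "HOL-Algebra.Ideal"
begin

text \<open>Functions X \<rightarrow> R are represented as real-valued functions that vanish
  outside the topspace (extensional), so that ring elements are determined by
  their values on X.\<close>

definition cozero_set :: "'a topology \<Rightarrow> 'a set \<Rightarrow> bool" where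
  "cozero_set X U \<longleftrightarrow>
     (\<exists>h. continuous_map X euclideanreal h \<and> U = {x \<in> topspace X. h x \<noteq> 0})"

definition T2 :: "'a topology \<Rightarrow> ('a \<Rightarrow> real) set" where
  "T2 X = {f. (\<forall>x. x \<notin> topspace X \<longrightarrow> f x = 0) \<and>
             (\<exists>U. cozero_set X U \<and> X closure_of U = topspace X \<and>
                  continuous_map (subtopology X U) euclideanreal f)}"

definition T2_ring :: "'a topology \<Rightarrow> ('a \<Rightarrow> real) ring" where
  "T2_ring X = \<lparr> carrier = T2 X,
                 mult = (\<lambda>f g x. f x * g x),
                 one = (\<lambda>x. if x \<in> topspace X then 1 else 0),
                 zero = (\<lambda>x. 0),
                 add = (\<lambda>f g x. f x + g x) \<rparr>"

definition zero_set :: "'a topology \<Rightarrow> ('a \<Rightarrow> real) \<Rightarrow> 'a set" where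
  "zero_set X f = {x \<in> topspace X. f x = 0}"

definition M_int :: "'a topology \<Rightarrow> ('a \<Rightarrow> real) \<Rightarrow> ('a \<Rightarrow> real) set" where
  "M_int X g = T2 X \<inter> \<Inter> {M. maximalideal M (T2_ring X) \<and> g \<in> M}"

end

theory Submission
  imports Defs
begin

text \<open>For every point x of X, the functions in T''(X) vanishing at x form a maximal ideal:
  if h(x) \<noteq> 0, then 1 - h/h(x) vanishes at x, so any larger ideal contains 1. Hence every
  maximal ideal containing g at a zero x of g is one of these, and f lies in it.\<close>

lemma (in ring) maximalidealI_inverse_mod:
  assumes "ideal I R" and "\<one> \<notin> I"
    and inverse_mod: "\<And>a. a \<in> carrier R - I \<Longrightarrow> \<exists>b\<in>carrier R. \<one> \<ominus> b \<otimes> a \<in> I"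
  shows "maximalideal I R"
proof (rule maximalidealI[OF assms(1)])
  show "carrier R \<noteq> I" using \<open>\<one> \<notin> I\<close> by blast
next
  fix J assume J: "ideal J R" "I \<subseteq> J" "J \<subseteq> carrier R"
  interpret J: ideal J R by (rule J(1))
  show "J = I \<or> J = carrier R"
  proof (cases "J = I")
    case False
    then obtain a where a: "a \<in> J" "a \<notin> I" using J(2) by blast
    have aR: "a \<in> carrier R" using a(1) J(3) by blast
    obtain b where b: "b \<in> carrier R" "\<one> \<ominus> b \<otimes> a \<in> I"
      using inverse_mod aR a(2) by blast
    have "(\<one> \<ominus> b \<otimes> a) \<oplus> b \<otimes> a \<in> J"
      using b J(2) J.I_l_closed[OF a(1) b(1)] by blast
    moreover have "(\<one> \<ominus> b \<otimes> a) \<oplus> b \<otimes> a = \<one>"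
      using aR b(1) by algebra
    ultimately show ?thesis using J.one_imp_carrier by simp
  qed simp
qed

lemma openin_cozero_set: "cozero_set X U \<Longrightarrow> openin X U"
  unfolding cozero_set_def
  using openin_continuous_map_preimage[where U = "- {0}"] by fastforce

lemma cozero_set_Int: "cozero_set X U \<Longrightarrow> cozero_set X V \<Longrightarrow> cozero_set X (U \<inter> V)"
  unfolding cozero_set_def
proof (elim exE conjE)
  fix h k assume "continuous_map X euclideanreal h" "continuous_map X euclideanreal k"
    and "U = {x \<in> topspace X. h x \<noteq> 0}" "V = {x \<in> topspace X. k x \<noteq> 0}"
  then show "\<exists>m. continuous_map X euclideanreal m \<and> U \<inter> V = {x \<in> topspace X. m x \<noteq> 0}"
    by (intro exI[of _ "\<lambda>x. h x * k x"]) (auto intro: continuous_map_real_mult)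
qed

lemma cozero_set_topspace: "cozero_set X (topspace X)"
  unfolding cozero_set_def by (auto intro!: exI[of _ "\<lambda>x. 1"])

lemma closure_of_openin_Int_dense:
  assumes "openin X U" "X closure_of U = topspace X" "X closure_of V = topspace X"
  shows "X closure_of (U \<inter> V) = topspace X"
proof -
  have "X closure_of (U \<inter> V) = X closure_of (U \<inter> X closure_of V)"
    using closure_of_openin_Int_closure_of[OF assms(1)] by simp
  also have "\<dots> = topspace X"
    using assms openin_subset[OF assms(1)] by (simp add: Int_absorb2)
  finally show ?thesis .
qed

lemma T2_common_domain:
  assumes "f \<in> T2 X" "g \<in> T2 X"
  obtains W where "cozero_set X W" "X closure_of W = topspace X"
    "continuous_map (subtopology X W) euclideanreal f"
    "continuous_map (subtopology X W) euclideanreal g"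
proof -
  obtain U where U: "cozero_set X U" "X closure_of U = topspace X"
    "continuous_map (subtopology X U) euclideanreal f"
    using assms(1) unfolding T2_def by blast
  obtain V where V: "cozero_set X V" "X closure_of V = topspace X"
    "continuous_map (subtopology X V) euclideanreal g"
    using assms(2) unfolding T2_def by blast
  show thesis
  proof
    show "cozero_set X (U \<inter> V)" using U(1) V(1) by (rule cozero_set_Int)
    show "X closure_of (U \<inter> V) = topspace X"
      using openin_cozero_set[OF U(1)] U(2) V(2) by (rule closure_of_openin_Int_dense)
    show "continuous_map (subtopology X (U \<inter> V)) euclideanreal f"
      using U(3) by (rule continuous_map_from_subtopology_mono) blast
    show "continuous_map (subtopology X (U \<inter> V)) euclideanreal g"
      using V(3) by (rule continuous_map_from_subtopology_mono) blast
  qed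
qed

lemma T2_combine:
  assumes "f \<in> T2 X" "g \<in> T2 X" "F 0 0 = 0"
    and continuous_F: "\<And>Y. continuous_map Y euclideanreal f \<Longrightarrow> continuous_map Y euclideanreal g
                         \<Longrightarrow> continuous_map Y euclideanreal (\<lambda>x. F (f x) (g x))"
  shows "(\<lambda>x. F (f x) (g x)) \<in> T2 X"
proof -
  obtain W where "cozero_set X W" "X closure_of W = topspace X"
    "continuous_map (subtopology X W) euclideanreal f"
    "continuous_map (subtopology X W) euclideanreal g"
    using assms(1,2) by (rule T2_common_domain)
  then show ?thesis
    using assms(1-3) continuous_F unfolding T2_def by auto
qed

lemma T2_add: "f \<in> T2 X \<Longrightarrow> g \<in> T2 X \<Longrightarrow> (\<lambda>x. f x + g x) \<in> T2 X"
  by (rule T2_combine) (auto intro: continuous_map_add)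

lemma T2_mult: "f \<in> T2 X \<Longrightarrow> g \<in> T2 X \<Longrightarrow> (\<lambda>x. f x * g x) \<in> T2 X"
  by (rule T2_combine) (auto intro: continuous_map_real_mult)

lemma T2_diff: "f \<in> T2 X \<Longrightarrow> g \<in> T2 X \<Longrightarrow> (\<lambda>x. f x - g x) \<in> T2 X"
  by (rule T2_combine) (auto intro: continuous_map_diff)

lemma T2_uminus: "f \<in> T2 X \<Longrightarrow> (\<lambda>x. - f x) \<in> T2 X"
  unfolding T2_def by (auto intro: continuous_map_minus)

lemma T2_const: "(\<lambda>x. if x \<in> topspace X then c else 0) \<in> T2 X"
proof -
  have "continuous_map (subtopology X (topspace X)) euclideanreal
          (\<lambda>x. if x \<in> topspace X then c else 0)"
    by (rule continuous_map_eq[of _ _ "\<lambda>x. c"]) auto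
  then show ?thesis
    using cozero_set_topspace unfolding T2_def by (auto intro!: exI[of _ "topspace X"])
qed

lemma ring_T2_ring: "ring (T2_ring X)"
proof (rule ringI)
  show "abelian_group (T2_ring X)"
  proof (rule abelian_groupI)
    fix f assume "f \<in> carrier (T2_ring X)"
    then show "\<exists>g\<in>carrier (T2_ring X). g \<oplus>\<^bsub>T2_ring X\<^esub> f = \<zero>\<^bsub>T2_ring X\<^esub>"
      by (auto simp: T2_ring_def intro!: bexI[of _ "\<lambda>x. - f x"] T2_uminus)
  next
    show "\<zero>\<^bsub>T2_ring X\<^esub> \<in> carrier (T2_ring X)"
      using T2_const[of X 0] by (simp add: T2_ring_def)
  qed (auto simp: T2_ring_def T2_add algebra_simps)
next
  show "monoid (T2_ring X)"
  proof (rule monoidI)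
    show "\<one>\<^bsub>T2_ring X\<^esub> \<in> carrier (T2_ring X)"
      using T2_const[of X 1] by (simp add: T2_ring_def)
  next
    fix f g assume "f \<in> carrier (T2_ring X)" "g \<in> carrier (T2_ring X)"
    then show "f \<otimes>\<^bsub>T2_ring X\<^esub> g \<in> carrier (T2_ring X)"
      by (simp add: T2_ring_def T2_mult)
  qed (auto simp: T2_ring_def T2_def)
qed (auto simp: T2_ring_def algebra_simps)

lemma a_inv_T2_ring:
  assumes "f \<in> T2 X" shows "\<ominus>\<^bsub>T2_ring X\<^esub> f = (\<lambda>x. - f x)"
proof -
  interpret ring "T2_ring X" by (rule ring_T2_ring)
  show ?thesis
    by (rule add.inv_equality) (auto simp: T2_ring_def assms T2_uminus)
qed

lemma a_minus_T2_ring: "g \<in> T2 X \<Longrightarrow> f \<ominus>\<^bsub>T2_ring X\<^esub> g = (\<lambda>x. f x - g x)"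
  by (simp add: a_minus_def a_inv_T2_ring) (simp add: T2_ring_def)

definition vanishing_ideal :: "'a topology \<Rightarrow> 'a \<Rightarrow> ('a \<Rightarrow> real) set" where
  "vanishing_ideal X x = {h \<in> T2 X. h x = 0}"

lemma ideal_vanishing_ideal: "ideal (vanishing_ideal X x) (T2_ring X)"
proof (rule idealI[OF ring_T2_ring])
  interpret ring "T2_ring X" by (rule ring_T2_ring)
  show "subgroup (vanishing_ideal X x) (add_monoid (T2_ring X))"
  proof (rule add.subgroupI)
    show "vanishing_ideal X x \<noteq> {}"
      using T2_const[of X 0] by (auto simp: vanishing_ideal_def)
  next
    fix h assume "h \<in> vanishing_ideal X x"
    then show "\<ominus>\<^bsub>T2_ring X\<^esub> h \<in> vanishing_ideal X x"
      by (simp add: vanishing_ideal_def a_inv_T2_ring T2_uminus)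
  qed (auto simp: vanishing_ideal_def T2_ring_def T2_add)
qed (auto simp: vanishing_ideal_def T2_ring_def T2_mult)

lemma maximalideal_vanishing_ideal:
  assumes "x \<in> topspace X"
  shows "maximalideal (vanishing_ideal X x) (T2_ring X)"
proof (rule ring.maximalidealI_inverse_mod[OF ring_T2_ring ideal_vanishing_ideal])
  show "\<one>\<^bsub>T2_ring X\<^esub> \<notin> vanishing_ideal X x"
    using assms by (simp add: vanishing_ideal_def T2_ring_def)
next
  fix h assume h: "h \<in> carrier (T2_ring X) - vanishing_ideal X x"
  define c where "c = (\<lambda>y. if y \<in> topspace X then 1 / h x else 0)"
  have hT: "h \<in> T2 X" and "h x \<noteq> 0"
    using h by (auto simp: T2_ring_def vanishing_ideal_def)
  have cT: "c \<in> T2 X" unfolding c_def by (rule T2_const)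
  let ?k = "\<lambda>y. (if y \<in> topspace X then 1 else 0) - c y * h y"
  have "c \<otimes>\<^bsub>T2_ring X\<^esub> h = (\<lambda>y. c y * h y)" by (simp add: T2_ring_def)
  then have "\<one>\<^bsub>T2_ring X\<^esub> \<ominus>\<^bsub>T2_ring X\<^esub> c \<otimes>\<^bsub>T2_ring X\<^esub> h = ?k"
    by (simp add: a_minus_T2_ring[OF T2_mult[OF cT hT]]) (simp add: T2_ring_def)
  moreover have "?k \<in> T2 X" by (intro T2_diff T2_const T2_mult cT hT)
  then have "?k \<in> vanishing_ideal X x"
    using assms \<open>h x \<noteq> 0\<close> by (simp add: vanishing_ideal_def c_def)
  ultimately have "\<one>\<^bsub>T2_ring X\<^esub> \<ominus>\<^bsub>T2_ring X\<^esub> c \<otimes>\<^bsub>T2_ring X\<^esub> h \<in> vanishing_ideal X x"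
    by simp
  moreover have "c \<in> carrier (T2_ring X)" using cT by (simp add: T2_ring_def)
  ultimately show "\<exists>c\<in>carrier (T2_ring X).
      \<one>\<^bsub>T2_ring X\<^esub> \<ominus>\<^bsub>T2_ring X\<^esub> c \<otimes>\<^bsub>T2_ring X\<^esub> h \<in> vanishing_ideal X x"
    by blast
qed

theorem lemma5p0:
  fixes X :: "'a topology" and f g :: "'a \<Rightarrow> real"
  assumes "t1_space X"
    and "f \<in> T2 X" and "g \<in> T2 X"
    and "f \<in> M_int X g"
  shows "zero_set X g \<subseteq> zero_set X f"
proof
  fix x assume "x \<in> zero_set X g"
  then have x: "x \<in> topspace X" "g x = 0" by (auto simp: zero_set_def)
  then have "g \<in> vanishing_ideal X x"
    using assms(3) by (simp add: vanishing_ideal_def)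
  with maximalideal_vanishing_ideal[OF x(1)] assms(4) have "f \<in> vanishing_ideal X x"
    unfolding M_int_def by blast
  then show "x \<in> zero_set X f" using x(1) by (simp add: zero_set_def vanishing_ideal_def)
qed

end
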